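(* Let $X_0,X_1,\ldots$ be a stationary mean-zero Gaussian sequence with covariance $\Gamma(k)=\mathrm{E}[X_0X_k]$, $\Gamma(0)=1$, having a spectral density $f$ (so $\Gamma(k)=\int_{-\pi}^{\pi}e^{-ik\phi}f(\phi)\,d\phi$) which is continuous and strictly positive on $[-\pi,\pi]$. Let $K=K_n$ be real numbers with $K=o\!\left(\sqrt{n/\log\log n}\right)$. With $$A(x)=\sum_{k=0}^{n}\sum_{j=0}^{n}\Gamma(k-j)x^{k+j},\quad B(x)=\sum_{k=0}^{n}\sum_{j=0}^{n}\Gamma(k-j)\,k\,x^{k+j-1},\quad C(x)=\sum_{k=0}^{n}\sum_{j=0}^{n}\Gamma(k-j)\,kj\,x^{k+j-2},$$ and $$F_2(x)=\frac{1}{\pi}\,\frac{\sqrt{2}\,|B(x)K|}{A(x)^{3/2}}\exp\!\left(-\frac{K^2}{2A(x)}\right)\mathrm{erf}\!\left(\frac{|B(x)K|}{\sqrt{2A(x)\left(A(x)C(x)-B(x)^2\right)}}\right),$$ we have, as $n\to\infty$, $$\int_1^{\infty}F_2(x)\,dx=o(1)\quad\text{and}\quad\int_{-\infty}^{-1}F_2(x)\,dx=o(1).$$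
   Context: $\mathrm{erf}(u)=\frac{2}{\sqrt{\pi}}\int_0^u e^{-t^2}dt$. *)

theory Defs
  imports "HOL-Analysis.Analysis" "HOL-Library.Landau_Symbols"
begin

definition erf_fn :: "real \<Rightarrow> real" where
  "erf_fn u = 2 / sqrt pi *
     (if 0 \<le> u then integral {0..u} (\<lambda>t. exp (- t\<^sup>2))
      else - integral {u..0} (\<lambda>t. exp (- t\<^sup>2)))"

definition covA :: "(int \<Rightarrow> real) \<Rightarrow> nat \<Rightarrow> real \<Rightarrow> real" where
  "covA \<Gamma> n x = (\<Sum>k\<le>n. \<Sum>j\<le>n. \<Gamma> (int k - int j) * x ^ (k + j))"

definition covB :: "(int \<Rightarrow> real) \<Rightarrow> nat \<Rightarrow> real \<Rightarrow> real" where
  "covB \<Gamma> n x = (\<Sum>k\<le>n. \<Sum>j\<le>n. \<Gamma> (int k - int j) * real k * x ^ (k + j - 1))"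

definition covC :: "(int \<Rightarrow> real) \<Rightarrow> nat \<Rightarrow> real \<Rightarrow> real" where
  "covC \<Gamma> n x = (\<Sum>k\<le>n. \<Sum>j\<le>n. \<Gamma> (int k - int j) * (real k * real j) * x ^ (k + j - 2))"

definition F2 :: "(int \<Rightarrow> real) \<Rightarrow> nat \<Rightarrow> real \<Rightarrow> real \<Rightarrow> real" where
  "F2 \<Gamma> n K x =
    (let A = covA \<Gamma> n x; B = covB \<Gamma> n x; C = covC \<Gamma> n x in
     (1 / pi) * (sqrt 2 * \<bar>B * K\<bar> / A powr (3/2)) * exp (- K\<^sup>2 / (2 * A))
       * erf_fn (\<bar>B * K\<bar> / sqrt (2 * A * (A * C - B\<^sup>2))))"

end

theory Submission
  imports Defs "HOL-Computational_Algebra.Fundamental_Theorem_Algebra" "HOL-Real_Asymp.Real_Asymp"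
begin

text \<open>
  Since \<open>erf\<close> is bounded and \<open>A' = 2B\<close>, the integrand is dominated by a constant times
  \<open>\<bar>K\<bar> B / A\<^sup>3\<^sup>/\<^sup>2 = \<bar>K\<bar> (-A\<^sup>-\<^sup>1\<^sup>/\<^sup>2)'\<close>, so on \<open>[1, \<infinity>)\<close> the integral is at most a constant times
  \<open>\<bar>K\<bar> / \<surd>A(1)\<close>, provided \<open>A\<close> increases to \<open>\<infinity>\<close> there.
  Writing \<open>A(x) = \<integral> f(\<phi>) \<bar>\<Sum>\<^sub>k (x e\<^sup>i\<^sup>\<phi>)\<^sup>k\<bar>\<^sup>2 d\<phi>\<close>, the lower bound on \<open>f\<close> gives
  \<open>A(1) \<ge> 2\<pi> (min f) (n + 1)\<close>, and \<open>A\<close> is increasing on \<open>x \<ge> 1\<close> because every root of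
  \<open>1 + z + \<dots> + z\<^sup>n\<close> lies on the unit circle, so that each factor \<open>\<bar>x w - r\<bar>\<close> grows with \<open>x\<close>.
  Hence both tail integrals are \<open>O(\<bar>K\<bar> / \<surd>n) = o(1)\<close>. The negative half-line is the same
  argument applied to \<open>x \<mapsto> A(-x)\<close>.
\<close>

subsection \<open>The error function\<close>

lemma integral_gaussian_interval_le_pi:
  assumes "a \<le> b"
  shows "integral {a..b} (\<lambda>t. exp (- t\<^sup>2)) \<le> pi"
proof -
  have arctan_int: "((\<lambda>t::real. 1 / (1 + t\<^sup>2)) has_integral (arctan b - arctan a)) {a..b}"
  proof (rule fundamental_theorem_of_calculus[OF assms])
    fix x :: real
    have "(arctan has_real_derivative 1 / (1 + x\<^sup>2)) (at x)"
      using DERIV_arctan[of x] by (simp add: inverse_eq_divide)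
    then show "(arctan has_vector_derivative 1 / (1 + x\<^sup>2)) (at x within {a..b})"
      by (simp add: has_real_derivative_iff_has_vector_derivative[symmetric] has_field_derivative_at_within)
  qed
  have "integral {a..b} (\<lambda>t. exp (- t\<^sup>2)) \<le> integral {a..b} (\<lambda>t::real. 1 / (1 + t\<^sup>2))"
  proof (rule integral_le)
    show "(\<lambda>t. exp (- t\<^sup>2)) integrable_on {a..b}"
      by (intro integrable_continuous_interval continuous_intros)
    show "(\<lambda>t::real. 1 / (1 + t\<^sup>2)) integrable_on {a..b}"
      using arctan_int by blast
    fix t :: real
    have "exp (- t\<^sup>2) * (1 + t\<^sup>2) \<le> exp (- t\<^sup>2) * exp (t\<^sup>2)"
      by (intro mult_left_mono exp_ge_add_one_self) auto
    then show "exp (- t\<^sup>2) \<le> 1 / (1 + t\<^sup>2)"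
      by (simp add: exp_minus field_simps add_pos_nonneg)
  qed
  also have "\<dots> = arctan b - arctan a"
    using arctan_int by (rule integral_unique)
  also have "\<dots> \<le> pi"
    using arctan_bounded[of a] arctan_bounded[of b] by linarith
  finally show ?thesis .
qed

lemma integral_gaussian_interval_nonneg: "0 \<le> integral {a..b} (\<lambda>t::real. exp (- t\<^sup>2))"
  by (rule integral_nonneg) (auto intro!: integrable_continuous_interval continuous_intros)

text \<open>A crude bound (the truth is \<open>1\<close>) that avoids evaluating the Gaussian integral.\<close>

lemma abs_erf_fn_le: "\<bar>erf_fn u\<bar> \<le> 2 * sqrt pi"
proof -
  have "\<bar>if 0 \<le> u then integral {0..u} (\<lambda>t. exp (- t\<^sup>2))
      else - integral {u..0} (\<lambda>t. exp (- t\<^sup>2))\<bar> \<le> pi"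
    using integral_gaussian_interval_le_pi[of 0 u] integral_gaussian_interval_le_pi[of u 0]
      integral_gaussian_interval_nonneg[of 0 u] integral_gaussian_interval_nonneg[of u 0]
    by auto
  then have "\<bar>erf_fn u\<bar> \<le> 2 / sqrt pi * pi"
    unfolding erf_fn_def abs_mult by (intro mult_mono) simp_all
  also have "2 / sqrt pi * pi = 2 * sqrt pi"
    using real_div_sqrt[of pi] by simp
  finally show ?thesis .
qed

lemma mono_erf_fn: "mono erf_fn"
proof (rule monoI)
  fix u v :: real
  assume uv: "u \<le> v"
  let ?h = "\<lambda>t::real. exp (- t\<^sup>2)"
  have int: "?h integrable_on {a..b}" for a b
    by (intro integrable_continuous_interval continuous_intros)
  have "integral {0..u} ?h \<le> integral {0..v} ?h" "integral {v..0} ?h \<le> integral {u..0} ?h"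
    using uv by (auto intro!: integral_subset_le int)
  then have "(if 0 \<le> u then integral {0..u} ?h else - integral {u..0} ?h)
      \<le> (if 0 \<le> v then integral {0..v} ?h else - integral {v..0} ?h)"
    using uv integral_gaussian_interval_nonneg[of u 0] integral_gaussian_interval_nonneg[of 0 v]
    by auto
  then show "erf_fn u \<le> erf_fn v"
    unfolding erf_fn_def by (intro mult_left_mono) auto
qed

lemma borel_measurable_erf_fn [measurable]: "erf_fn \<in> borel_measurable borel"
  by (rule borel_measurable_mono[OF mono_erf_fn])

subsection \<open>Tail integrals of \<open>F\<^sub>2\<close> for an increasing \<open>A\<close> with \<open>A' = 2B\<close>\<close>

definition F2_of :: "(real \<Rightarrow> real) \<Rightarrow> (real \<Rightarrow> real) \<Rightarrow> (real \<Rightarrow> real) \<Rightarrow> real \<Rightarrow> real \<Rightarrow> real" where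
  "F2_of A B C K x = (1 / pi) * (sqrt 2 * \<bar>B x * K\<bar> / A x powr (3/2)) * exp (- K\<^sup>2 / (2 * A x))
       * erf_fn (\<bar>B x * K\<bar> / sqrt (2 * A x * (A x * C x - (B x)\<^sup>2)))"

lemma F2_scaled_eq_F2_of:
  assumes "\<bar>s\<bar> = 1"
  shows "F2 \<Gamma> n K (s * x)
    = F2_of (\<lambda>x. covA \<Gamma> n (s * x)) (\<lambda>x. s * covB \<Gamma> n (s * x)) (\<lambda>x. covC \<Gamma> n (s * x)) K x"
proof -
  have "s\<^sup>2 = 1"
    using assms by (metis abs_power2 one_power2 power2_abs)
  then show ?thesis
    using assms by (simp add: F2_def F2_of_def Let_def abs_mult power_mult_distrib)
qed

lemma nonneg_if_has_derivative_mono: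
  fixes A :: "real \<Rightarrow> real"
  assumes "(A has_real_derivative D) (at x)" and "\<And>y. x \<le> y \<Longrightarrow> A x \<le> A y"
  shows "0 \<le> D"
proof (rule ccontr)
  assume "\<not> 0 \<le> D"
  then obtain d where "d > 0" "\<forall>h>0. h < d \<longrightarrow> A (x + h) < A x"
    using DERIV_neg_dec_right[OF assms(1)] by (meson not_le)
  then have "A (x + d/2) < A x" by simp
  then show False
    using assms(2)[of "x + d/2"] \<open>d > 0\<close> by simp
qed

lemma has_integral_B_div_A_three_halves:
  fixes A B :: "real \<Rightarrow> real"
  assumes deriv: "\<And>x. 1 \<le> x \<Longrightarrow> (A has_real_derivative 2 * B x) (at x)"
    and mono: "\<And>x y. 1 \<le> x \<Longrightarrow> x \<le> y \<Longrightarrow> A x \<le> A y"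
    and A1: "0 < A 1"
    and A_top: "filterlim A at_top at_top"
  shows "((\<lambda>x. B x / (A x * sqrt (A x))) has_integral inverse (sqrt (A 1))) {1..}"
proof -
  define G where "G x = - inverse (sqrt (A x))" for x
  have A_pos: "0 < A x" if "1 \<le> x" for x
    using mono[OF order_refl that] A1 by linarith
  have G_deriv: "(G has_real_derivative B x / (A x * sqrt (A x))) (at x)" if "1 \<le> x" for x
  proof -
    have "(G has_real_derivative
        - (- (inverse (sqrt (A x)) * (inverse (sqrt (A x)) / 2 * (2 * B x)) * inverse (sqrt (A x))))) (at x)"
      unfolding G_def[abs_def] using A_pos[OF that]
      by (intro DERIV_minus DERIV_inverse' DERIV_chain2[OF DERIV_real_sqrt deriv[OF that]]) auto
    moreover have "- (- (inverse (sqrt (A x)) * (inverse (sqrt (A x)) / 2 * (2 * B x)) * inverse (sqrt (A x))))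
        = B x / (A x * sqrt (A x))"
      using A_pos[OF that] by (simp add: field_simps)
    ultimately show ?thesis by simp
  qed
  have FTC: "((\<lambda>x. B x / (A x * sqrt (A x))) has_integral (G y - G 1)) {1..y}" if "1 \<le> y" for y
    using that G_deriv
    by (intro fundamental_theorem_of_calculus)
      (auto simp: has_real_derivative_iff_has_vector_derivative[symmetric] intro: has_field_derivative_at_within)
  show ?thesis
  proof (rule has_integral_to_inf)
    show "(\<lambda>x. B x / (A x * sqrt (A x))) integrable_on {1..y}" for y
      using FTC by (cases "1 \<le> y") auto
    show "0 \<le> B x / (A x * sqrt (A x))" if "1 \<le> x" for x
      using nonneg_if_has_derivative_mono[OF deriv[OF that]] mono[OF that] A_pos[OF that] by simp
    have "((\<lambda>y. inverse (sqrt (A y))) \<longlongrightarrow> 0) at_top"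
      by (intro tendsto_inverse_0_at_top filterlim_compose[OF sqrt_at_top A_top])
    then have "((\<lambda>y. inverse (sqrt (A 1)) - inverse (sqrt (A y))) \<longlongrightarrow> inverse (sqrt (A 1)) - 0) at_top"
      by (intro tendsto_intros)
    then have "((\<lambda>y. G y - G 1) \<longlongrightarrow> inverse (sqrt (A 1))) at_top"
      by (simp add: G_def)
    moreover have "\<forall>\<^sub>F y in at_top. G y - G 1 = integral {1..y} (\<lambda>x. B x / (A x * sqrt (A x)))"
      using eventually_ge_at_top[of 1] by eventually_elim (use FTC integral_unique in metis)
    ultimately show "((\<lambda>y. integral {1..y} (\<lambda>x. B x / (A x * sqrt (A x)))) \<longlongrightarrow> inverse (sqrt (A 1))) at_top"
      by (rule Lim_transform_eventually)
  qed
qed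

lemma abs_F2_of_le:
  assumes "0 < A x" "0 \<le> B x"
  shows "\<bar>F2_of A B C K x\<bar> \<le> 2 * sqrt 2 / sqrt pi * \<bar>K\<bar> * (B x / (A x * sqrt (A x)))"
proof -
  define P where "P = (1 / pi) * (sqrt 2 * B x * \<bar>K\<bar> / (A x * sqrt (A x)))"
  have P_nonneg: "0 \<le> P"
    using assms by (simp add: P_def)
  have "A x powr (3/2) = A x * sqrt (A x)"
    using assms(1) by (simp add: powr_add[of _ 1 "1/2", simplified] powr_half_sqrt)
  then have "\<bar>F2_of A B C K x\<bar>
      = P * exp (- K\<^sup>2 / (2 * A x)) * \<bar>erf_fn (\<bar>B x * K\<bar> / sqrt (2 * A x * (A x * C x - (B x)\<^sup>2)))\<bar>"
    using assms P_nonneg by (simp add: F2_of_def P_def abs_mult)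
  also have "\<dots> \<le> P * 1 * (2 * sqrt pi)"
    using assms P_nonneg by (intro mult_mono[OF mult_left_mono] abs_erf_fn_le) auto
  also have "\<dots> = (2 * sqrt pi / pi) * sqrt 2 * \<bar>K\<bar> * (B x / (A x * sqrt (A x)))"
    by (simp add: P_def)
  also have "2 * sqrt pi / pi = 2 / sqrt pi"
    using real_div_sqrt[of pi] by (simp add: field_simps)
  finally show ?thesis
    by (simp add: mult_ac)
qed

lemma F2_of_tail_integral_bound:
  fixes A B C :: "real \<Rightarrow> real" and K :: real
  assumes deriv: "\<And>x. 1 \<le> x \<Longrightarrow> (A has_real_derivative 2 * B x) (at x)"
    and cont: "continuous_on UNIV A" "continuous_on UNIV B" "continuous_on UNIV C"
    and mono: "\<And>x y. 1 \<le> x \<Longrightarrow> x \<le> y \<Longrightarrow> A x \<le> A y"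
    and A1: "0 < A 1"
    and A_top: "filterlim A at_top at_top"
  shows "F2_of A B C K absolutely_integrable_on {1..}"
    and "\<bar>integral {1..} (F2_of A B C K)\<bar> \<le> 2 * sqrt 2 / sqrt pi * \<bar>K\<bar> / sqrt (A 1)"
proof -
  define c where "c = 2 * sqrt 2 / sqrt pi * \<bar>K\<bar>"
  have majorant: "((\<lambda>x. c * (B x / (A x * sqrt (A x)))) has_integral c / sqrt (A 1)) {1..}"
    using has_integral_mult_right[OF has_integral_B_div_A_three_halves[OF deriv mono A1 A_top]]
    by (simp add: divide_inverse)
  have bound: "norm (F2_of A B C K x) \<le> c * (B x / (A x * sqrt (A x)))" if "x \<in> {1..}" for x
  proof -
    have "0 < A x" using that mono[of 1 x] A1 by simp
    moreover have "0 \<le> B x"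
      using that mono[of x] nonneg_if_has_derivative_mono[OF deriv] by simp
    ultimately show ?thesis
      unfolding c_def real_norm_def by (rule abs_F2_of_le)
  qed
  have [measurable]: "A \<in> borel_measurable borel" "B \<in> borel_measurable borel" "C \<in> borel_measurable borel"
    using cont by (auto intro: borel_measurable_continuous_onI)
  have "F2_of A B C K \<in> borel_measurable borel"
    unfolding F2_of_def[abs_def] by measurable
  then have meas: "F2_of A B C K \<in> borel_measurable (lebesgue_on {1..})"
    by (intro measurable_restrict_space1 measurable_completion) simp
  have sets: "{1::real..} \<in> sets lebesgue"
    by simp
  show "F2_of A B C K absolutely_integrable_on {1..}"
    using majorant bound by (intro measurable_bounded_by_integrable_imp_absolutely_integrable[OF meas sets]) auto
  show "\<bar>integral {1..} (F2_of A B C K)\<bar> \<le> 2 * sqrt 2 / sqrt pi * \<bar>K\<bar> / sqrt (A 1)"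
    using integral_norm_bound_integral'[OF bound meas sets majorant] by (simp add: c_def)
qed

subsection \<open>Geometric sums off the unit circle\<close>

lemma norm_scaled_diff_mono:
  fixes w r :: complex
  assumes w: "cmod w = 1" and r: "cmod r = 1" and st: "1 \<le> s" "s \<le> t"
  shows "cmod (of_real s * w - r) \<le> cmod (of_real t * w - r)"
proof -
  obtain a b where wab: "w = Complex a b" by (cases w)
  obtain u v where ruv: "r = Complex u v" by (cases r)
  have w2: "a\<^sup>2 + b\<^sup>2 = 1" and r2: "u\<^sup>2 + v\<^sup>2 = 1"
    using w r wab ruv by (simp_all add: cmod_def)
  define p where "p = a * u + b * v"
  have p_le: "p \<le> 1"
    using w2 r2 sum_power2_ge_zero[of "a - u" "b - v"]
    by (simp add: p_def power2_eq_square algebra_simps)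
  have sq: "(cmod (of_real x * w - r))\<^sup>2 = x\<^sup>2 - 2 * x * p + 1" for x
  proof -
    have "(cmod (of_real x * w - r))\<^sup>2 = (x * a - u)\<^sup>2 + (x * b - v)\<^sup>2"
      by (simp add: cmod_power2 wab ruv)
    also have "\<dots> = x\<^sup>2 * (a\<^sup>2 + b\<^sup>2) - 2 * x * p + (u\<^sup>2 + v\<^sup>2)"
      by (simp add: p_def power2_eq_square algebra_simps)
    finally show ?thesis using w2 r2 by simp
  qed
  have "t\<^sup>2 - 2 * t * p + 1 - (s\<^sup>2 - 2 * s * p + 1) = (t - s) * (t + s - 2 * p)"
    by (simp add: power2_eq_square algebra_simps)
  also have "\<dots> \<ge> 0"
    using st p_le by (intro mult_nonneg_nonneg) auto
  finally have "(cmod (of_real s * w - r))\<^sup>2 \<le> (cmod (of_real t * w - r))\<^sup>2"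
    by (simp add: sq)
  then show ?thesis
    by (simp add: power2_le_iff_abs_le)
qed

lemma norm_eq_1_if_geometric_sum_eq_0:
  fixes r :: complex
  assumes "(\<Sum>k\<le>n. r ^ k) = 0"
  shows "cmod r = 1"
proof -
  have "(1 - r) * (\<Sum>k\<le>n. r ^ k) = 1 - r ^ Suc n"
    by (rule sum_gp_basic)
  then have "cmod r ^ Suc n = 1 ^ Suc n"
    using assms by (metis diff_zero eq_iff_diff_eq_0 mult_zero_right norm_one norm_power power_one)
  then show ?thesis
    by (rule power_eq_imp_eq_base) auto
qed

lemma norm_geometric_sum_mono:
  fixes w :: complex
  assumes w: "cmod w = 1" and st: "1 \<le> s" "s \<le> t"
  shows "cmod (\<Sum>k\<le>n. (of_real s * w) ^ k) \<le> cmod (\<Sum>k\<le>n. (of_real t * w) ^ k)"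
proof -
  define p :: "complex poly" where "p = (\<Sum>k\<le>n. monom 1 k)"
  have poly_p: "poly p z = (\<Sum>k\<le>n. z ^ k)" for z
    by (simp add: p_def poly_sum poly_monom)
  define R where "R = {r. poly p r = 0}"
  have decomp: "smult (lead_coeff p) (\<Prod>r\<in>R. [:-r, 1:] ^ order r p) = p"
    unfolding R_def by (rule complex_poly_decompose)
  have "poly p z = lead_coeff p * (\<Prod>r\<in>R. (z - r) ^ order r p)" for z
    by (subst decomp[symmetric]) (simp add: poly_prod)
  then have norm_poly_p: "cmod (poly p z) = cmod (lead_coeff p) * (\<Prod>r\<in>R. cmod (z - r) ^ order r p)" for z
    by (simp add: norm_mult prod_norm[symmetric] norm_power)
  have "cmod (of_real s * w - r) ^ order r p \<le> cmod (of_real t * w - r) ^ order r p" if "r \<in> R" for r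
  proof -
    have "cmod r = 1"
      using that by (intro norm_eq_1_if_geometric_sum_eq_0[of r n]) (simp add: R_def poly_p)
    then show ?thesis
      by (intro power_mono norm_scaled_diff_mono[OF w _ st]) auto
  qed
  then have "cmod (poly p (of_real s * w)) \<le> cmod (poly p (of_real t * w))"
    unfolding norm_poly_p by (intro mult_left_mono prod_mono) auto
  then show ?thesis
    by (simp only: poly_p)
qed

lemma sum_power2_powers_ge:
  fixes x :: real
  assumes "1 \<le> x" "1 \<le> n"
  shows "x \<le> (\<Sum>k\<le>n. (x ^ k)\<^sup>2)"
proof -
  have "x \<le> x ^ n"
    using assms power_increasing[of 1 n x] by simp
  also have "\<dots> \<le> (x ^ n)\<^sup>2"
    using assms by (simp add: power2_eq_square)
  also have "\<dots> \<le> (\<Sum>k\<le>n. (x ^ k)\<^sup>2)"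
    by (rule member_le_sum) auto
  finally show ?thesis .
qed

subsection \<open>Toeplitz forms of a spectral density\<close>

definition toeplitz_form :: "(int \<Rightarrow> real) \<Rightarrow> nat \<Rightarrow> (nat \<Rightarrow> real) \<Rightarrow> real" where
  "toeplitz_form \<Gamma> n a = (\<Sum>k\<le>n. \<Sum>j\<le>n. \<Gamma> (int k - int j) * (a k * a j))"

definition trig_norm_sq :: "nat \<Rightarrow> (nat \<Rightarrow> real) \<Rightarrow> real \<Rightarrow> real" where
  "trig_norm_sq n a \<phi> = (cmod (\<Sum>k\<le>n. of_real (a k) * cis (real k * \<phi>)))\<^sup>2"

lemma covA_eq_toeplitz_form: "covA \<Gamma> n x = toeplitz_form \<Gamma> n (\<lambda>k. x ^ k)"
  by (simp add: covA_def toeplitz_form_def power_add)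

lemma trig_norm_sq_eq_cos_sum:
  "trig_norm_sq n a \<phi> = (\<Sum>k\<le>n. \<Sum>j\<le>n. a k * a j * cos (of_int (int k - int j) * \<phi>))"
proof -
  let ?z = "\<Sum>k\<le>n. of_real (a k) * cis (real k * \<phi>)"
  have "(of_real (a k) * cis (real k * \<phi>)) * cnj (of_real (a j) * cis (real j * \<phi>))
      = of_real (a k * a j) * cis ((real k - real j) * \<phi>)" for k j
    by (simp add: cis_cnj cis_mult algebra_simps)
  then have "complex_of_real ((cmod ?z)\<^sup>2)
      = (\<Sum>k\<le>n. \<Sum>j\<le>n. of_real (a k * a j) * cis ((real k - real j) * \<phi>))"
    by (simp only: complex_norm_square sum_product cnj_sum)
  then have "(cmod ?z)\<^sup>2 = Re (\<Sum>k\<le>n. \<Sum>j\<le>n. of_real (a k * a j) * cis ((real k - real j) * \<phi>))"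
    by (metis Re_complex_of_real)
  then show ?thesis
    by (simp add: trig_norm_sq_def Re_sum)
qed

lemma trig_norm_sq_powers:
  "trig_norm_sq n (\<lambda>k. x ^ k) \<phi> = (cmod (\<Sum>k\<le>n. (of_real x * cis \<phi>) ^ k))\<^sup>2"
  by (simp add: trig_norm_sq_def Complex.DeMoivre power_mult_distrib)

lemma has_integral_cos_int:
  fixes m :: int
  shows "((\<lambda>\<phi>. cos (of_int m * \<phi>)) has_integral (if m = 0 then 2 * pi else 0)) {-pi..pi}"
proof (cases "m = 0")
  case True
  then show ?thesis
    using has_integral_const_real[of "1::real" "-pi" pi] by simp
next
  case False
  have "((\<lambda>\<phi>. cos (of_int m * \<phi>)) has_integral
      (sin (of_int m * pi) / of_int m - sin (of_int m * (-pi)) / of_int m)) {-pi..pi}"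
  proof (rule fundamental_theorem_of_calculus)
    fix x :: real
    have "((\<lambda>\<phi>. sin (of_int m * \<phi>) / of_int m) has_real_derivative cos (of_int m * x)) (at x)"
      using False by (auto intro!: derivative_eq_intros)
    then show "((\<lambda>\<phi>. sin (of_int m * \<phi>) / of_int m) has_vector_derivative cos (of_int m * x))
        (at x within {-pi..pi})"
      by (simp add: has_real_derivative_iff_has_vector_derivative[symmetric] has_field_derivative_at_within)
  qed simp
  moreover have "sin (of_int m * pi) = 0"
    using sin_times_pi_eq_0[of "of_int m"] by simp
  ultimately show ?thesis
    using False by simp
qed

lemma has_integral_trig_norm_sq: "(trig_norm_sq n a has_integral 2 * pi * (\<Sum>k\<le>n. (a k)\<^sup>2)) {-pi..pi}"
proof -
  have "((\<lambda>\<phi>. \<Sum>k\<le>n. \<Sum>j\<le>n. a k * a j * cos (of_int (int k - int j) * \<phi>)) has_integral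
      (\<Sum>k\<le>n. \<Sum>j\<le>n. a k * a j * (if int k - int j = 0 then 2 * pi else 0))) {-pi..pi}"
    by (intro has_integral_sum finite_atMost has_integral_mult_right has_integral_cos_int)
  moreover have "(\<Sum>k\<le>n. \<Sum>j\<le>n. a k * a j * (if int k - int j = 0 then 2 * pi else 0))
      = 2 * pi * (\<Sum>k\<le>n. (a k)\<^sup>2)"
    by (simp add: if_distrib[of "\<lambda>c. _ * c"] sum.delta sum_distrib_left power2_eq_square mult_ac
        cong: if_cong)
  ultimately show ?thesis
    by (simp add: trig_norm_sq_eq_cos_sum[abs_def])
qed

lemma has_integral_cos_spectral:
  assumes "continuous_on {-pi..pi} f"
    and "\<And>k. complex_of_real (\<Gamma> k) =
      integral {-pi..pi} (\<lambda>\<phi>. exp (- \<i> * of_int k * of_real \<phi>) * of_real (f \<phi>))"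
  shows "((\<lambda>\<phi>. cos (of_int m * \<phi>) * f \<phi>) has_integral \<Gamma> m) {-pi..pi}"
proof -
  let ?g = "\<lambda>\<phi>. exp (- \<i> * of_int m * of_real \<phi>) * of_real (f \<phi>)"
  have "?g integrable_on {-pi..pi}"
    by (intro integrable_continuous_interval continuous_intros assms(1))
  then have "((\<lambda>\<phi>. Re (?g \<phi>)) has_integral Re (integral {-pi..pi} ?g)) {-pi..pi}"
    by (intro has_integral_Re integrable_integral)
  moreover have "Re (integral {-pi..pi} ?g) = \<Gamma> m"
    using assms(2)[of m] by (metis Re_complex_of_real)
  moreover have "(\<lambda>\<phi>. Re (?g \<phi>)) = (\<lambda>\<phi>. cos (of_int m * \<phi>) * f \<phi>)"
    by (simp add: fun_eq_iff Re_exp)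
  ultimately show ?thesis
    by simp
qed

context
  fixes \<Gamma> :: "int \<Rightarrow> real" and f :: "real \<Rightarrow> real"
  assumes Gamma_cos: "\<And>m. ((\<lambda>\<phi>. cos (of_int m * \<phi>) * f \<phi>) has_integral \<Gamma> m) {-pi..pi}"
begin

lemma Gamma_minus: "\<Gamma> (- m) = \<Gamma> m"
  using Gamma_cos[of "- m"] Gamma_cos[of m] by (simp add: has_integral_unique)

lemma has_integral_toeplitz_form:
  "((\<lambda>\<phi>. f \<phi> * trig_norm_sq n a \<phi>) has_integral toeplitz_form \<Gamma> n a) {-pi..pi}"
proof -
  have "((\<lambda>\<phi>. \<Sum>k\<le>n. \<Sum>j\<le>n. (a k * a j) * (cos (of_int (int k - int j) * \<phi>) * f \<phi>)) has_integral
      (\<Sum>k\<le>n. \<Sum>j\<le>n. (a k * a j) * \<Gamma> (int k - int j))) {-pi..pi}"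
    by (intro has_integral_sum finite_atMost has_integral_mult_right Gamma_cos)
  then show ?thesis
    by (simp add: trig_norm_sq_eq_cos_sum toeplitz_form_def sum_distrib_left mult_ac)
qed

lemma toeplitz_form_mono:
  assumes "\<And>\<phi>. \<phi> \<in> {-pi..pi} \<Longrightarrow> 0 \<le> f \<phi>"
    and "\<And>\<phi>. trig_norm_sq n a \<phi> \<le> trig_norm_sq n b \<phi>"
  shows "toeplitz_form \<Gamma> n a \<le> toeplitz_form \<Gamma> n b"
  using assms by (intro has_integral_le[OF has_integral_toeplitz_form has_integral_toeplitz_form]
      mult_left_mono)

lemma toeplitz_form_ge:
  assumes "\<And>\<phi>. \<phi> \<in> {-pi..pi} \<Longrightarrow> c \<le> f \<phi>"
  shows "2 * pi * c * (\<Sum>k\<le>n. (a k)\<^sup>2) \<le> toeplitz_form \<Gamma> n a"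
proof -
  have "((\<lambda>\<phi>. c * trig_norm_sq n a \<phi>) has_integral c * (2 * pi * (\<Sum>k\<le>n. (a k)\<^sup>2))) {-pi..pi}"
    by (intro has_integral_mult_right has_integral_trig_norm_sq)
  then have "c * (2 * pi * (\<Sum>k\<le>n. (a k)\<^sup>2)) \<le> toeplitz_form \<Gamma> n a"
    by (rule has_integral_le[OF _ has_integral_toeplitz_form])
      (use assms in \<open>auto intro!: mult_right_mono simp: trig_norm_sq_def\<close>)
  then show ?thesis
    by (simp add: mult_ac)
qed

lemma has_real_derivative_covA: "(covA \<Gamma> n has_real_derivative 2 * covB \<Gamma> n x) (at x)"
proof -
  have "(covA \<Gamma> n has_real_derivative
      (\<Sum>k\<le>n. \<Sum>j\<le>n. \<Gamma> (int k - int j) * (real (k + j) * x ^ (k + j - Suc 0)))) (at x)"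
    unfolding covA_def[abs_def] by (intro DERIV_sum DERIV_cmult DERIV_pow)
  moreover have "(\<Sum>k\<le>n. \<Sum>j\<le>n. \<Gamma> (int k - int j) * (real (k + j) * x ^ (k + j - Suc 0)))
      = covB \<Gamma> n x + (\<Sum>k\<le>n. \<Sum>j\<le>n. \<Gamma> (int k - int j) * real j * x ^ (k + j - 1))"
    by (simp add: covB_def sum.distrib[symmetric] algebra_simps)
  moreover have "(\<Sum>k\<le>n. \<Sum>j\<le>n. \<Gamma> (int k - int j) * real j * x ^ (k + j - 1)) = covB \<Gamma> n x"
    \<comment> \<open>swap the summations and use \<open>\<Gamma>(j - k) = \<Gamma>(k - j)\<close>\<close>
    unfolding covB_def
    by (subst sum.swap) (metis (no_types, lifting) Gamma_minus minus_diff_eq add.commute sum.cong)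
  ultimately show ?thesis
    by simp
qed

lemma covA_scaled_mono:
  assumes "\<And>\<phi>. \<phi> \<in> {-pi..pi} \<Longrightarrow> 0 \<le> f \<phi>" and "\<bar>s\<bar> = 1" and "1 \<le> x" "x \<le> y"
  shows "covA \<Gamma> n (s * x) \<le> covA \<Gamma> n (s * y)"
  unfolding covA_eq_toeplitz_form
proof (rule toeplitz_form_mono[OF assms(1)])
  fix \<phi>
  have "cmod (of_real s * cis \<phi>) = 1"
    using assms(2) by (simp add: norm_mult)
  then have "cmod (\<Sum>k\<le>n. (of_real x * (of_real s * cis \<phi>)) ^ k)
      \<le> cmod (\<Sum>k\<le>n. (of_real y * (of_real s * cis \<phi>)) ^ k)"
    using assms(3,4) by (rule norm_geometric_sum_mono)
  then show "trig_norm_sq n (\<lambda>k. (s * x) ^ k) \<phi> \<le> trig_norm_sq n (\<lambda>k. (s * y) ^ k) \<phi>"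
    unfolding trig_norm_sq_powers by (simp add: power_mono mult_ac)
qed

lemma covA_scaled_ge:
  assumes "\<And>\<phi>. \<phi> \<in> {-pi..pi} \<Longrightarrow> c \<le> f \<phi>" and "\<bar>s\<bar> = 1"
  shows "2 * pi * c * (\<Sum>k\<le>n. (x ^ k)\<^sup>2) \<le> covA \<Gamma> n (s * x)"
proof -
  have "((s * x) ^ k)\<^sup>2 = (x ^ k)\<^sup>2" for k
    using assms(2) by (metis abs_mult power_abs mult_1 power2_abs)
  then show ?thesis
    using toeplitz_form_ge[OF assms(1), where n = n and a = "\<lambda>k. (s * x) ^ k"] by (simp add: covA_eq_toeplitz_form)
qed

lemma covA_scaled_ge_linear:
  assumes "0 < c" "\<And>\<phi>. \<phi> \<in> {-pi..pi} \<Longrightarrow> c \<le> f \<phi>" and "\<bar>s\<bar> = 1" and "1 \<le> n" "1 \<le> x"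
  shows "2 * pi * c * x \<le> covA \<Gamma> n (s * x)"
proof -
  have "2 * pi * c * x \<le> 2 * pi * c * (\<Sum>k\<le>n. (x ^ k)\<^sup>2)"
    using assms(1,4,5) sum_power2_powers_ge by (intro mult_left_mono) auto
  also have "\<dots> \<le> covA \<Gamma> n (s * x)"
    using assms(2,3) by (rule covA_scaled_ge)
  finally show ?thesis .
qed

lemma F2_scaled_tail_integral_bound:
  assumes c: "0 < c" "\<And>\<phi>. \<phi> \<in> {-pi..pi} \<Longrightarrow> c \<le> f \<phi>" and s: "\<bar>s\<bar> = 1" and n: "1 \<le> n"
  shows "(\<lambda>x. F2 \<Gamma> n K (s * x)) absolutely_integrable_on {1..}"
    and "\<bar>integral {1..} (\<lambda>x. F2 \<Gamma> n K (s * x))\<bar>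
      \<le> 2 * sqrt 2 / sqrt pi * \<bar>K\<bar> / sqrt (2 * pi * c * (real n + 1))"
proof -
  define A where "A x = covA \<Gamma> n (s * x)" for x
  define B where "B x = s * covB \<Gamma> n (s * x)" for x
  define C where "C x = covC \<Gamma> n (s * x)" for x
  have F2_eq: "(\<lambda>x. F2 \<Gamma> n K (s * x)) = F2_of A B C K"
    using s by (simp add: fun_eq_iff F2_scaled_eq_F2_of A_def[abs_def] B_def[abs_def] C_def[abs_def])
  have f_nonneg: "0 \<le> f \<phi>" if "\<phi> \<in> {-pi..pi}" for \<phi>
    using c that by (meson less_le_trans less_imp_le)
  have deriv: "(A has_real_derivative 2 * B x) (at x)" for x
  proof -
    have "((\<lambda>x. covA \<Gamma> n (s * x)) has_real_derivative 2 * covB \<Gamma> n (s * x) * s) (at x)"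
      by (rule DERIV_chain2[OF has_real_derivative_covA DERIV_cmult_Id])
    then show ?thesis
      by (simp add: A_def[abs_def] B_def mult_ac)
  qed
  have cont: "continuous_on UNIV A" "continuous_on UNIV B" "continuous_on UNIV C"
    unfolding A_def B_def C_def covA_def covB_def covC_def by (intro continuous_intros)+
  have mono: "A x \<le> A y" if "1 \<le> x" "x \<le> y" for x y
    unfolding A_def using covA_scaled_mono[OF f_nonneg s that] .
  have A1: "2 * pi * c * (real n + 1) \<le> A 1"
    using covA_scaled_ge[OF c(2) s, where n = n and x = 1] by (simp add: A_def add.commute)
  have "\<forall>\<^sub>F x in at_top. 2 * pi * c * x \<le> A x"
    using eventually_ge_at_top[of 1]
    by eventually_elim (use covA_scaled_ge_linear[OF c s n] in \<open>simp add: A_def\<close>)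
  then have A_top: "filterlim A at_top at_top"
    using c by (intro filterlim_at_top_mono[OF filterlim_tendsto_pos_mult_at_top[OF tendsto_const _ filterlim_ident]]) auto
  have A1_pos: "0 < A 1"
    using c(1) by (intro order_less_le_trans[OF _ A1]) simp
  show "(\<lambda>x. F2 \<Gamma> n K (s * x)) absolutely_integrable_on {1..}"
    unfolding F2_eq using F2_of_tail_integral_bound(1)[OF deriv cont mono A1_pos A_top] .
  have "\<bar>integral {1..} (F2_of A B C K)\<bar> \<le> 2 * sqrt 2 / sqrt pi * \<bar>K\<bar> / sqrt (A 1)"
    using F2_of_tail_integral_bound(2)[OF deriv cont mono A1_pos A_top] .
  also have "\<dots> \<le> 2 * sqrt 2 / sqrt pi * \<bar>K\<bar> / sqrt (2 * pi * c * (real n + 1))"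
    using A1 A1_pos c by (intro divide_left_mono mult_pos_pos) auto
  finally show "\<bar>integral {1..} (\<lambda>x. F2 \<Gamma> n K (s * x))\<bar>
      \<le> 2 * sqrt 2 / sqrt pi * \<bar>K\<bar> / sqrt (2 * pi * c * (real n + 1))"
    unfolding F2_eq .
qed

lemma F2_half_line_integral_bounds:
  assumes c: "0 < c" "\<And>\<phi>. \<phi> \<in> {-pi..pi} \<Longrightarrow> c \<le> f \<phi>" and n: "1 \<le> n"
  shows "F2 \<Gamma> n K absolutely_integrable_on {1..}"
    and "\<bar>integral {1..} (F2 \<Gamma> n K)\<bar> \<le> 2 * sqrt 2 / sqrt pi * \<bar>K\<bar> / sqrt (2 * pi * c * (real n + 1))"
    and "F2 \<Gamma> n K absolutely_integrable_on {..-1}"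
    and "\<bar>integral {..-1} (F2 \<Gamma> n K)\<bar> \<le> 2 * sqrt 2 / sqrt pi * \<bar>K\<bar> / sqrt (2 * pi * c * (real n + 1))"
proof -
  note right = F2_scaled_tail_integral_bound[where c = c and s = 1 and n = n and K = K, OF c _ n]
  note left = F2_scaled_tail_integral_bound[where c = c and s = "-1" and n = n and K = K, OF c _ n]
  show "F2 \<Gamma> n K absolutely_integrable_on {1..}"
    "\<bar>integral {1..} (F2 \<Gamma> n K)\<bar> \<le> 2 * sqrt 2 / sqrt pi * \<bar>K\<bar> / sqrt (2 * pi * c * (real n + 1))"
    using right by simp_all
  show "F2 \<Gamma> n K absolutely_integrable_on {..-1}"
    "\<bar>integral {..-1} (F2 \<Gamma> n K)\<bar> \<le> 2 * sqrt 2 / sqrt pi * \<bar>K\<bar> / sqrt (2 * pi * c * (real n + 1))"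
    using left has_absolute_integral_reflect_real[of "{1..}" "{..-1}" "F2 \<Gamma> n K"
        "integral {1..} (\<lambda>x. F2 \<Gamma> n K (-x))"]
    by auto
qed

end

lemma tendsto_div_sqrt_linear_if_smallo_sqrt_div_ln_ln:
  fixes K :: "nat \<Rightarrow> real"
  assumes "K \<in> o(\<lambda>n. sqrt (real n / ln (ln (real n))))" and "0 < c"
  shows "(\<lambda>n. C * \<bar>K n\<bar> / sqrt (c * (real n + 1))) \<longlonglongrightarrow> 0"
proof -
  have "(\<lambda>n::nat. sqrt (real n / ln (ln (real n)))) \<in> O(\<lambda>n. sqrt (real n + 1))"
    by real_asymp
  with assms(1) have "K \<in> o(\<lambda>n. sqrt (real n + 1))"
    by (rule landau_o.small_big_trans)
  then have "(\<lambda>n. C / sqrt c * \<bar>K n / sqrt (real n + 1)\<bar>) \<longlonglongrightarrow> 0"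
    by (intro tendsto_mult_right_zero tendsto_rabs_zero smalloD_tendsto)
  then show ?thesis
    using assms(2) by (simp add: real_sqrt_mult abs_div)
qed

theorem lemma3p1:
  fixes \<Gamma> :: "int \<Rightarrow> real" and f :: "real \<Rightarrow> real" and K :: "nat \<Rightarrow> real"
  assumes f_cont: "continuous_on {-pi..pi} f"
    and f_pos: "\<And>\<phi>. \<phi> \<in> {-pi..pi} \<Longrightarrow> f \<phi> > 0"
    and spectral: "\<And>k. complex_of_real (\<Gamma> k) =
        integral {-pi..pi} (\<lambda>\<phi>. exp (- \<i> * of_int k * of_real \<phi>) * of_real (f \<phi>))"
    and Gamma0: "\<Gamma> 0 = 1"
    and K_small: "K \<in> o(\<lambda>n. sqrt (real n / ln (ln (real n))))"
  shows "(\<forall>\<^sub>F n in sequentially. (\<lambda>x. F2 \<Gamma> n (K n) x) integrable_on {1..})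
       \<and> (\<lambda>n. integral {1..} (\<lambda>x. F2 \<Gamma> n (K n) x)) \<longlonglongrightarrow> 0
       \<and> (\<forall>\<^sub>F n in sequentially. (\<lambda>x. F2 \<Gamma> n (K n) x) integrable_on {..-1})
       \<and> (\<lambda>n. integral {..-1} (\<lambda>x. F2 \<Gamma> n (K n) x)) \<longlonglongrightarrow> 0"
proof -
  obtain c where c: "0 < c" "\<And>\<phi>. \<phi> \<in> {-pi..pi} \<Longrightarrow> c \<le> f \<phi>"
    using continuous_attains_inf[OF compact_Icc _ f_cont] f_pos
    by (metis atLeastAtMost_iff empty_iff pi_ge_zero neg_le_0_iff_le)
  note bounds = F2_half_line_integral_bounds[OF has_integral_cos_spectral[OF f_cont spectral] c]
  have bound_0: "(\<lambda>n. 2 * sqrt 2 / sqrt pi * \<bar>K n\<bar> / sqrt (2 * pi * c * (real n + 1))) \<longlonglongrightarrow> 0"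
    using c(1) by (intro tendsto_div_sqrt_linear_if_smallo_sqrt_div_ln_ln K_small) simp
  have eventually_1: "\<forall>\<^sub>F n in sequentially. 1 \<le> n"
    by (rule eventually_ge_at_top)
  show ?thesis
  proof (intro conjI)
    show "\<forall>\<^sub>F n in sequentially. (\<lambda>x. F2 \<Gamma> n (K n) x) integrable_on {1..}"
      "\<forall>\<^sub>F n in sequentially. (\<lambda>x. F2 \<Gamma> n (K n) x) integrable_on {..-1}"
      using bounds(1,3) by (auto intro!: eventually_mono[OF eventually_1] simp: absolutely_integrable_on_def)
    show "(\<lambda>n. integral {1..} (\<lambda>x. F2 \<Gamma> n (K n) x)) \<longlonglongrightarrow> 0"
      "(\<lambda>n. integral {..-1} (\<lambda>x. F2 \<Gamma> n (K n) x)) \<longlonglongrightarrow> 0"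
      using bounds(2,4) by (auto intro!: Lim_null_comparison[OF eventually_mono[OF eventually_1] bound_0])
  qed
qed

end
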